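(* Suppose $S\subseteq\mathbb{Z}^r$ is integrally-poised for polynomials of degree $n+1$. If $g$ is an integer-valued polynomial in $r$ variables of degree $n$, then there is an equality of subgroups of $\mathbb{Z}^r$: \[ \langle g(\mathbf{x})\mathbf{x}\mid \mathbf{x}\in\mathbb{Z}^r\rangle=\langle g(\mathbf{x})\mathbf{x}\mid \mathbf{x}\in S\rangle . \]
   Context: An integer-valued (numerical) polynomial is a polynomial $f\in\mathbb{Q}[x_1,\ldots,x_r]$ with $f(\mathbf{x})\in\mathbb{Z}$ for all $\mathbf{x}\in\mathbb{Z}^r$. A subset $S\subseteq\mathbb{Z}^r$ is integrally-poised for polynomials of degree $m$ if there exists a family of numerical polynomials $\{c_{\mathbf{a}}\}_{\mathbf{a}\in S}$ such that $f(\mathbf{x})=\sum_{\mathbf{a}\in S}c_{\mathbf{a}}(\mathbf{x})f(\mathbf{a})$ for all polynomials $f$ of degree $m$ and all $\mathbf{x}\in\mathbb{Z}^r$. *)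

theory Defs
  imports Complex_Main
begin

text \<open>Points of Z^r are functions 'n \<Rightarrow> int for a finite index type 'n (r = CARD('n)).
  Multi-indices are functions 'n \<Rightarrow> nat; the total degree of alpha is sum alpha UNIV.\<close>

definition monomials_upto :: "nat \<Rightarrow> ('n::finite \<Rightarrow> nat) set" where
  "monomials_upto m = {alpha. sum alpha UNIV \<le> m}"

definition rat_poly_deg :: "nat \<Rightarrow> (('n::finite \<Rightarrow> int) \<Rightarrow> rat) \<Rightarrow> bool" where
  "rat_poly_deg m f \<longleftrightarrow> (\<exists>c :: ('n \<Rightarrow> nat) \<Rightarrow> rat. \<forall>x.
      f x = (\<Sum>alpha\<in>monomials_upto m. c alpha * (\<Prod>i\<in>UNIV. of_int (x i) ^ alpha i)))"

definition numerical_poly_deg :: "nat \<Rightarrow> (('n::finite \<Rightarrow> int) \<Rightarrow> int) \<Rightarrow> bool" where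
  "numerical_poly_deg m g \<longleftrightarrow> rat_poly_deg m (\<lambda>x. of_int (g x))"

definition numerical_poly :: "(('n::finite \<Rightarrow> int) \<Rightarrow> int) \<Rightarrow> bool" where
  "numerical_poly g \<longleftrightarrow> (\<exists>m. numerical_poly_deg m g)"

definition integrally_poised :: "nat \<Rightarrow> ('n::finite \<Rightarrow> int) set \<Rightarrow> bool" where
  "integrally_poised m S \<longleftrightarrow> finite S \<and>
     (\<exists>c :: ('n \<Rightarrow> int) \<Rightarrow> ('n \<Rightarrow> int) \<Rightarrow> int.
        (\<forall>a\<in>S. numerical_poly (c a)) \<and>
        (\<forall>f. rat_poly_deg m f \<longrightarrow> (\<forall>x. f x = (\<Sum>a\<in>S. of_int (c a x) * f a))))"

definition zsubgroup :: "('n \<Rightarrow> int) set \<Rightarrow> bool" where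
  "zsubgroup H \<longleftrightarrow> (\<lambda>_. 0) \<in> H \<and> (\<forall>a\<in>H. \<forall>b\<in>H. (\<lambda>i. a i - b i) \<in> H)"

definition zgen :: "('n \<Rightarrow> int) set \<Rightarrow> ('n \<Rightarrow> int) set" where
  "zgen A = \<Inter>{H. zsubgroup H \<and> A \<subseteq> H}"

end

theory Submission
  imports Defs "HOL-Library.FuncSet"
begin

text \<open>Interpolating the degree-(n+1) polynomial g(x) x_i with the integer-valued weights of S writes
  g(x) x as an integer combination of the vectors g(a) a with a in S, uniformly in the coordinate i.
  So every generator on the left lies in the group generated by the right-hand generators, and the
  converse inclusion is trivial. Only the integrality of the weights c_a(x) is used, not the fact
  that each c_a is a numerical polynomial.\<close>

lemma finite_monomials_upto: "finite (monomials_upto m :: ('n::finite \<Rightarrow> nat) set)"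
proof (rule finite_subset)
  show "monomials_upto m \<subseteq> PiE (UNIV :: 'n set) (\<lambda>_. {..m})"
  proof
    fix a :: "'n \<Rightarrow> nat"
    assume "a \<in> monomials_upto m"
    then have "a j \<le> m" for j
      using member_le_sum[of j UNIV a] by (simp add: monomials_upto_def)
    then show "a \<in> PiE UNIV (\<lambda>_. {..m})" by auto
  qed
qed (simp add: finite_PiE)

lemma prod_power_fun_upd_Suc:
  fixes f :: "'n::finite \<Rightarrow> 'a::comm_monoid_mult"
  shows "(\<Prod>j\<in>UNIV. f j ^ (a(i := Suc (a i))) j) = (\<Prod>j\<in>UNIV. f j ^ a j) * f i"
proof -
  have "(\<Prod>j\<in>UNIV. f j ^ (a(i := Suc (a i))) j) = (\<Prod>j\<in>UNIV. f j ^ a j * (if j = i then f j else 1))"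
    by (rule prod.cong) (auto simp: mult.commute)
  also have "\<dots> = (\<Prod>j\<in>UNIV. f j ^ a j) * f i"
    by (simp add: prod.distrib prod.delta)
  finally show ?thesis .
qed

lemma monomials_upto_Suc_image:
  "(\<lambda>a. a(i := Suc (a i))) ` monomials_upto m = {b \<in> monomials_upto (Suc m). 0 < b i}"
  (is "?f ` ?M = ?B")
proof (intro equalityI subsetI)
  fix b assume "b \<in> ?f ` ?M"
  then obtain a where "a \<in> ?M" "b = ?f a" by blast
  moreover have "sum (?f a) UNIV = Suc (sum a UNIV)"
    by (simp add: sum.remove[of UNIV i])
  ultimately show "b \<in> ?B" by (simp add: monomials_upto_def)
next
  fix b assume b: "b \<in> ?B"
  define a where "a = b(i := b i - 1)"
  have "sum b UNIV = Suc (sum a UNIV)"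
    using b by (simp add: a_def sum.remove[of UNIV i])
  then have "a \<in> ?M" using b by (simp add: monomials_upto_def)
  moreover have "b = ?f a" using b by (auto simp: a_def)
  ultimately show "b \<in> ?f ` ?M" by blast
qed

lemma inj_fun_upd_Suc: "inj (\<lambda>a :: 'n \<Rightarrow> nat. a(i := Suc (a i)))"
proof (rule injI, rule ext)
  fix a b :: "'n \<Rightarrow> nat" and j
  assume h: "a(i := Suc (a i)) = b(i := Suc (b i))"
  from fun_cong[OF h, of j] fun_cong[OF h, of i] show "a j = b j" by (cases "j = i") auto
qed

lemma rat_poly_deg_mult_coordinate:
  assumes "rat_poly_deg m f"
  shows "rat_poly_deg (m + 1) (\<lambda>x. f x * of_int (x i))"
proof -
  from assms obtain c where c: "\<And>x. f x = (\<Sum>a\<in>monomials_upto m. c a * (\<Prod>j\<in>UNIV. of_int (x j) ^ a j))"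
    unfolding rat_poly_deg_def by blast
  let ?f = "\<lambda>a :: 'a \<Rightarrow> nat. a(i := Suc (a i))"
  let ?M = "monomials_upto m :: ('a \<Rightarrow> nat) set"
  let ?M1 = "monomials_upto (Suc m) :: ('a \<Rightarrow> nat) set"
  define c' where "c' b = (if 0 < b i then c (b(i := b i - 1)) else 0)" for b :: "'a \<Rightarrow> nat"
  have "f x * of_int (x i) = (\<Sum>b\<in>?M1. c' b * (\<Prod>j\<in>UNIV. of_int (x j) ^ b j))" for x
  proof -
    let ?p = "\<lambda>b. \<Prod>j\<in>UNIV. (of_int (x j) :: rat) ^ b j"
    have "(\<Sum>b\<in>?M1. c' b * ?p b) = (\<Sum>b\<in>{b \<in> ?M1. 0 < b i}. c' b * ?p b)"
      by (rule sum.mono_neutral_right[OF finite_monomials_upto]) (auto simp: c'_def)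
    also have "\<dots> = (\<Sum>a\<in>?M. c' (?f a) * ?p (?f a))"
      unfolding monomials_upto_Suc_image[symmetric]
      by (rule sum.reindex[OF inj_on_subset[OF inj_fun_upd_Suc], unfolded comp_def]) simp
    also have "\<dots> = (\<Sum>a\<in>?M. c a * ?p a * of_int (x i))"
    proof (rule sum.cong[OF refl])
      fix a
      show "c' (?f a) * ?p (?f a) = c a * ?p a * of_int (x i)"
        using prod_power_fun_upd_Suc[of "\<lambda>j. of_int (x j) :: rat" a i] by (simp add: c'_def mult.assoc)
    qed
    also have "\<dots> = f x * of_int (x i)"
      by (simp add: c sum_distrib_right)
    finally show ?thesis by simp
  qed
  then show ?thesis unfolding rat_poly_deg_def Suc_eq_plus1[symmetric] by blast
qed

lemma numerical_poly_deg_mult_coordinate: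
  "numerical_poly_deg m g \<Longrightarrow> numerical_poly_deg (m + 1) (\<lambda>x. g x * x i)"
  unfolding numerical_poly_deg_def using rat_poly_deg_mult_coordinate by fastforce

lemma integrally_poised_interpolation:
  assumes "integrally_poised m S"
  obtains c where "\<And>h x. numerical_poly_deg m h \<Longrightarrow> h x = (\<Sum>a\<in>S. c a x * h a)"
proof -
  from assms obtain c where c: "\<And>f x. rat_poly_deg m f \<Longrightarrow> f x = (\<Sum>a\<in>S. of_int (c a x) * f a)"
    unfolding integrally_poised_def by blast
  have "h x = (\<Sum>a\<in>S. c a x * h a)" if "numerical_poly_deg m h" for h x
  proof -
    have "rat_poly_deg m (\<lambda>y. of_int (h y))"
      using that unfolding numerical_poly_deg_def .
    then have "(of_int (h x) :: rat) = (\<Sum>a\<in>S. of_int (c a x) * of_int (h a))"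
      by (rule c)
    then show ?thesis
      by (simp flip: of_int_eq_iff[where 'a = rat])
  qed
  then show ?thesis by (rule that)
qed

lemma zsubgroup_zero: "zsubgroup H \<Longrightarrow> (\<lambda>_. 0) \<in> H"
  unfolding zsubgroup_def by blast

lemma zsubgroup_diff: "zsubgroup H \<Longrightarrow> v \<in> H \<Longrightarrow> w \<in> H \<Longrightarrow> (\<lambda>i. v i - w i) \<in> H"
  unfolding zsubgroup_def by blast

lemma zsubgroup_uminus: "zsubgroup H \<Longrightarrow> v \<in> H \<Longrightarrow> (\<lambda>i. - v i) \<in> H"
  using zsubgroup_diff[OF _ zsubgroup_zero] by fastforce

lemma zsubgroup_add: "zsubgroup H \<Longrightarrow> v \<in> H \<Longrightarrow> w \<in> H \<Longrightarrow> (\<lambda>i. v i + w i) \<in> H"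
  using zsubgroup_diff[of H v "\<lambda>i. - w i"] zsubgroup_uminus[of H w] by simp

lemma zsubgroup_scale_nat: "zsubgroup H \<Longrightarrow> v \<in> H \<Longrightarrow> (\<lambda>i. int k * v i) \<in> H"
proof (induction k)
  case 0
  then show ?case using zsubgroup_zero by simp
next
  case (Suc k)
  then have "(\<lambda>i. int k * v i + v i) \<in> H" using zsubgroup_add by blast
  then show ?case by (simp add: algebra_simps)
qed

lemma zsubgroup_scale: "zsubgroup H \<Longrightarrow> v \<in> H \<Longrightarrow> (\<lambda>i. k * v i) \<in> H"
proof (cases "k \<ge> 0")
  case True
  then show "zsubgroup H \<Longrightarrow> v \<in> H \<Longrightarrow> ?thesis"
    using zsubgroup_scale_nat[of H v "nat k"] by simp
next
  case False
  then show "zsubgroup H \<Longrightarrow> v \<in> H \<Longrightarrow> ?thesis"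
    using zsubgroup_uminus[OF _ zsubgroup_scale_nat[of H v "nat (- k)"]] by simp
qed

lemma zsubgroup_sum:
  assumes "zsubgroup H" "\<And>a. a \<in> S \<Longrightarrow> v a \<in> H"
  shows "(\<lambda>i. \<Sum>a\<in>S. k a * v a i) \<in> H"
  using assms(2)
proof (induction S rule: infinite_finite_induct)
  case (insert a F)
  then have "(\<lambda>i. k a * v a i + (\<Sum>a\<in>F. k a * v a i)) \<in> H"
    using zsubgroup_add[OF assms(1) zsubgroup_scale[OF assms(1)]] by blast
  then show ?case using insert by simp
qed (use assms(1) zsubgroup_zero in auto)

lemma zsubgroup_zgen: "zsubgroup (zgen A)"
  unfolding zsubgroup_def zgen_def using zsubgroup_zero zsubgroup_diff by blast

lemma zgen_least: "zsubgroup H \<Longrightarrow> A \<subseteq> H \<Longrightarrow> zgen A \<subseteq> H"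
  unfolding zgen_def by blast

lemma zgen_superset: "A \<subseteq> zgen A"
  unfolding zgen_def by blast

lemma zgen_mono: "A \<subseteq> B \<Longrightarrow> zgen A \<subseteq> zgen B"
  using zgen_least[OF zsubgroup_zgen] zgen_superset by blast

lemma zgen_range_eq_zgen_image:
  assumes "\<And>x. \<exists>k. v x = (\<lambda>i. \<Sum>a\<in>S. k a * v a i)"
  shows "zgen (range v) = zgen (v ` S)"
proof
  have "v x \<in> zgen (v ` S)" for x
  proof -
    obtain k where "v x = (\<lambda>i. \<Sum>a\<in>S. k a * v a i)" using assms by blast
    also have "\<dots> \<in> zgen (v ` S)"
      by (rule zsubgroup_sum[OF zsubgroup_zgen]) (simp add: zgen_superset[THEN subsetD])
    finally show ?thesis .
  qed
  then show "zgen (range v) \<subseteq> zgen (v ` S)"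
    by (intro zgen_least[OF zsubgroup_zgen]) blast
qed (simp add: zgen_mono image_mono)

theorem proposition3p4:
  fixes S :: "('n::finite \<Rightarrow> int) set" and g :: "('n \<Rightarrow> int) \<Rightarrow> int" and n :: nat
  assumes "integrally_poised (n + 1) S"
    and "numerical_poly_deg n g"
  shows "zgen ((\<lambda>x. (\<lambda>i. g x * x i)) ` UNIV) = zgen ((\<lambda>x. (\<lambda>i. g x * x i)) ` S)"
proof (rule zgen_range_eq_zgen_image)
  obtain c where c: "\<And>h x. numerical_poly_deg (n + 1) h \<Longrightarrow> h x = (\<Sum>a\<in>S. c a x * h a)"
    using integrally_poised_interpolation[OF assms(1)] by blast
  fix x
  have "g x * x i = (\<Sum>a\<in>S. c a x * (g a * a i))" for i
    using c[OF numerical_poly_deg_mult_coordinate[OF assms(2)]] .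
  then show "\<exists>k. (\<lambda>i. g x * x i) = (\<lambda>i. \<Sum>a\<in>S. k a * (g a * a i))"
    by (intro exI[of _ "\<lambda>a. c a x"]) (simp add: fun_eq_iff)
qed

end
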